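(* If $q$ is a power of an odd prime, then the graph $G_q$ is isomorphic to an induced subgraph of $ER_q$.
   Context: For a power $q$ of an odd prime, let $A=\{(a,a^2):a\in\mathbb{F}_q\}\subset\mathbb{F}_q^2$. The graph $G_q$ has vertex set $\mathbb{F}_q\times\mathbb{F}_q$, and distinct vertices $(x_1,x_2)$ and $(y_1,y_2)$ are adjacent if and only if $(x_1,x_2)+(y_1,y_2)\in A$ (equivalently $(x_1+y_1)^2=x_2+y_2$); $G_q$ has no loops. $ER_q$ is the graph whose vertices are the points of $PG(2,q)$, i.e. the $1$-dimensional subspaces of $\mathbb{F}_q^3$, where distinct vertices $(x_0,x_1,x_2)$ and $(y_0,y_1,y_2)$ (homogeneous coordinates) are adjacent if and only if $x_0y_0+x_1y_1+x_2y_2=0$. *)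

theory Defs
  imports "HOL-Computational_Algebra.Primes"
begin

text \<open>The finite field F_q is modelled by a finite field type 'a with CARD('a) = q.\<close>

definition parabola :: "('a::field \<times> 'a) set" where
  "parabola = {(a, a^2) | a. True}"

definition Gq_adj :: "('a::field \<times> 'a) \<Rightarrow> ('a \<times> 'a) \<Rightarrow> bool" where
  "Gq_adj x y \<longleftrightarrow> x \<noteq> y \<and> (fst x + fst y, snd x + snd y) \<in> parabola"

definition span1 :: "('a::field \<times> 'a \<times> 'a) \<Rightarrow> ('a \<times> 'a \<times> 'a) set" where
  "span1 v = {(c * fst v, c * fst (snd v), c * snd (snd v)) | c. True}"

definition PG2_points :: "('a::field \<times> 'a \<times> 'a) set set" where
  "PG2_points = {span1 v | v. v \<noteq> (0, 0, 0)}"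

definition dot3 :: "('a::field \<times> 'a \<times> 'a) \<Rightarrow> ('a \<times> 'a \<times> 'a) \<Rightarrow> 'a" where
  "dot3 x y = fst x * fst y + fst (snd x) * fst (snd y) + snd (snd x) * snd (snd y)"

text \<open>Adjacency of ER_q: distinct points whose homogeneous coordinates are orthogonal
  (well defined, so we require it for all vectors of the two subspaces).\<close>
definition ER_adj :: "('a::field \<times> 'a \<times> 'a) set \<Rightarrow> ('a \<times> 'a \<times> 'a) set \<Rightarrow> bool" where
  "ER_adj P Q \<longleftrightarrow> P \<in> PG2_points \<and> Q \<in> PG2_points \<and> P \<noteq> Q \<and>
     (\<forall>x\<in>P. \<forall>y\<in>Q. dot3 x y = 0)"

definition Gq_induced_in_ERq :: "'a::field itself \<Rightarrow> bool" where
  "Gq_induced_in_ERq _ \<longleftrightarrow> (\<exists>f :: 'a \<times> 'a \<Rightarrow> ('a \<times> 'a \<times> 'a) set.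
     inj f \<and> f ` UNIV \<subseteq> PG2_points \<and>
     (\<forall>u v. Gq_adj u v \<longleftrightarrow> ER_adj (f u) (f v)))"

end

theory Submission
  imports Defs "HOL-Number_Theory.Residues"
begin

(* Let F be a finite field of odd order q.
   (1) By pigeonhole, the (q+1)/2 squares a^2 and the (q+1)/2 values -1 - b^2 must meet,
       so -1 = a^2 + b^2 for some a, b.
   (2) Then e = (a, b, 1), f = -(a, b, -1)/2 and g = (b, -a, 0) form a hyperbolic frame of
       the dot product on F^3: e.e = f.f = e.g = f.g = 0, e.f = 1, g.g = -1.  In coordinates
       with respect to such a frame the dot product reads  al*be' + be*al' - ga*ga'.
   (3) The map psi(x, y) = e - (x^2 - y)/2 * f + x * g satisfies
         psi(u).psi(v) = -((x + x')^2 - (y + y'))/2,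
       so orthogonality of psi(u), psi(v) is exactly adjacency in G_q; moreover the
       e-coefficient 1 of psi(u) (read off by the dot product with f) makes u |-> span(psi u)
       injective.
   (4) A general criterion turns any vector map with these two properties into an
       embedding of G_q as an induced subgraph of ER_q; the theorem follows. *)

lemma card_square_roots_le_2:
  fixes s :: "'a::{finite,field}"
  shows "card {x. x^2 = s} \<le> 2"
proof (cases "\<exists>r. r^2 = s")
  case True
  then obtain r where r: "r^2 = s" by blast
  have "{x. x^2 = s} \<subseteq> {r, -r}"
  proof
    fix x assume "x \<in> {x. x^2 = s}"
    hence "(x - r) * (x + r) = 0" using r by (simp add: algebra_simps power2_eq_square)
    thus "x \<in> {r, -r}" by (auto simp: eq_neg_iff_add_eq_0)
  qed
  hence "card {x. x^2 = s} \<le> card {r, -r}" by (intro card_mono) auto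
  also have "\<dots> \<le> 2" by (simp add: card_insert_if)
  finally show ?thesis .
qed simp

text \<open>In a finite field of odd order, -1 is a sum of two squares: otherwise the squares and
  the values -1 - b^2 would be two disjoint sets each covering at least half the field.\<close>
lemma minus_one_sum_of_two_squares:
  assumes "odd (card (UNIV :: 'a::{finite,field} set))"
  shows "\<exists>a b :: 'a. a^2 + b^2 = -1"
proof (rule ccontr)
  assume no_sum: "\<not> ?thesis"
  define S where "S = range (\<lambda>a::'a. a^2)"
  define T where "T = (\<lambda>s. -1 - s) ` S"
  have "(UNIV::'a set) = (\<Union>s\<in>S. {x. x^2 = s})" by (auto simp: S_def)
  hence "card (UNIV::'a set) \<le> (\<Sum>s\<in>S. card {x. x^2 = s})"
    by (metis card_UN_le finite)
  also have "\<dots> \<le> (\<Sum>s\<in>S. 2)" by (intro sum_mono card_square_roots_le_2)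
  finally have half: "card (UNIV::'a set) \<le> 2 * card S" by simp
  have "inj_on (\<lambda>s::'a. -1 - s) S" by (auto simp: inj_on_def)
  hence card_T: "card T = card S" by (simp add: T_def card_image)
  have "S \<inter> T = {}"
  proof (rule ccontr)
    assume "S \<inter> T \<noteq> {}"
    then obtain a b :: 'a where "a^2 = -1 - b^2"
      unfolding S_def T_def by (auto simp del: diff_minus_eq_add)
    hence "a^2 + b^2 = -1" by (simp add: algebra_simps)
    thus False using no_sum by blast
  qed
  hence "card (S \<union> T) = card S + card T" by (simp add: card_Un_disjoint)
  moreover have "card (S \<union> T) \<le> card (UNIV::'a set)" by (simp add: card_mono)
  ultimately have "card (UNIV::'a set) = 2 * card S" using half card_T by linarith
  thus False using assms by simp
qed

lemma two_neq_zero_if_odd_card: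
  assumes "odd (card (UNIV :: 'a::{finite,field} set))"
  shows "(2::'a) \<noteq> 0"
proof
  assume two: "(2::'a) = 0"
  obtain k where k: "card (UNIV :: 'a set) = 2 * k + 1" using assms oddE by blast
  have "of_nat (card (UNIV :: 'a set)) = (0::'a)"
    using CHAR_dvd_CARD of_nat_eq_0_iff_char_dvd by blast
  hence "(2::'a) * of_nat k + 1 = 0" unfolding k by (simp add: add.commute)
  thus False using two by simp
qed

definition smult3 :: "'a::field \<Rightarrow> 'a \<times> 'a \<times> 'a \<Rightarrow> 'a \<times> 'a \<times> 'a" where
  "smult3 c v = (c * fst v, c * fst (snd v), c * snd (snd v))"

definition comb3 :: "'a::field \<Rightarrow> 'a \<Rightarrow> 'a \<Rightarrow> 'a \<times> 'a \<times> 'a \<Rightarrow> 'a \<times> 'a \<times> 'a \<Rightarrow> 'a \<times> 'a \<times> 'a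
    \<Rightarrow> 'a \<times> 'a \<times> 'a" where
  "comb3 \<alpha> \<beta> \<gamma> e f g =
     (\<alpha> * fst e + \<beta> * fst f + \<gamma> * fst g,
      \<alpha> * fst (snd e) + \<beta> * fst (snd f) + \<gamma> * fst (snd g),
      \<alpha> * snd (snd e) + \<beta> * snd (snd f) + \<gamma> * snd (snd g))"

lemma span1_eq_smult3: "span1 v = range (\<lambda>c. smult3 c v)"
  by (auto simp: span1_def smult3_def)

lemma smult3_comb3: "smult3 c (comb3 \<alpha> \<beta> \<gamma> e f g) = comb3 (c * \<alpha>) (c * \<beta>) (c * \<gamma>) e f g"
  by (simp add: smult3_def comb3_def algebra_simps)

lemma orthogonal_span1_iff:
  "(\<forall>x\<in>span1 v. \<forall>y\<in>span1 w. dot3 x y = 0) \<longleftrightarrow> dot3 v w = (0::'a::field)"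
proof -
  have "dot3 (smult3 c v) (smult3 d w) = c * d * dot3 v w" for c d :: 'a
    by (simp add: smult3_def dot3_def algebra_simps)
  moreover have "v = smult3 1 v" "w = smult3 1 w" by (simp_all add: smult3_def)
  ultimately show ?thesis unfolding span1_eq_smult3 by (auto simp del: mult_1)
qed

lemma span1_eq_imp_proportional:
  assumes "span1 v = span1 (w::'a::field \<times> 'a \<times> 'a)"
  shows "\<exists>c. v = smult3 c w"
proof -
  have "v \<in> span1 v" unfolding span1_eq_smult3 by (auto intro!: image_eqI[of _ _ 1] simp: smult3_def)
  thus ?thesis using assms unfolding span1_eq_smult3 by auto
qed

definition hyperbolic_frame :: "'a::field \<times> 'a \<times> 'a \<Rightarrow> 'a \<times> 'a \<times> 'a \<Rightarrow> 'a \<times> 'a \<times> 'a \<Rightarrow> bool" where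
  "hyperbolic_frame e f g \<longleftrightarrow>
     dot3 e e = 0 \<and> dot3 f f = 0 \<and> dot3 e f = 1 \<and> dot3 e g = 0 \<and> dot3 f g = 0 \<and> dot3 g g = -1"

lemma dot3_comb3_frame:
  assumes "hyperbolic_frame e f g"
  shows "dot3 (comb3 \<alpha> \<beta> \<gamma> e f g) (comb3 \<alpha>' \<beta>' \<gamma>' e f g) = \<alpha> * \<beta>' + \<beta> * \<alpha>' - \<gamma> * \<gamma>'"
proof -
  have "dot3 (comb3 \<alpha> \<beta> \<gamma> e f g) (comb3 \<alpha>' \<beta>' \<gamma>' e f g) =
      \<alpha>*\<alpha>' * dot3 e e + (\<alpha>*\<beta>' + \<beta>*\<alpha>') * dot3 e f + (\<alpha>*\<gamma>' + \<gamma>*\<alpha>') * dot3 e g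
      + \<beta>*\<beta>' * dot3 f f + (\<beta>*\<gamma>' + \<gamma>*\<beta>') * dot3 f g + \<gamma>*\<gamma>' * dot3 g g"
    by (simp add: comb3_def dot3_def algebra_simps)
  thus ?thesis using assms by (simp add: hyperbolic_frame_def)
qed

lemma dot3_comb3_coordinates:
  assumes "hyperbolic_frame e f g"
  shows "dot3 (comb3 \<alpha> \<beta> \<gamma> e f g) f = \<alpha>"
    and "dot3 (comb3 \<alpha> \<beta> \<gamma> e f g) e = \<beta>"
    and "dot3 (comb3 \<alpha> \<beta> \<gamma> e f g) g = - \<gamma>"
proof -
  have e: "comb3 1 0 0 e f g = e" and f: "comb3 0 1 0 e f g = f" and g: "comb3 0 0 1 e f g = g"
    by (simp_all add: comb3_def)
  show "dot3 (comb3 \<alpha> \<beta> \<gamma> e f g) f = \<alpha>"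
    using dot3_comb3_frame[OF assms, of \<alpha> \<beta> \<gamma> 0 1 0] by (simp add: f)
  show "dot3 (comb3 \<alpha> \<beta> \<gamma> e f g) e = \<beta>"
    using dot3_comb3_frame[OF assms, of \<alpha> \<beta> \<gamma> 1 0 0] by (simp add: e)
  show "dot3 (comb3 \<alpha> \<beta> \<gamma> e f g) g = - \<gamma>"
    using dot3_comb3_frame[OF assms, of \<alpha> \<beta> \<gamma> 0 0 1] by (simp add: g)
qed

lemma comb3_frame_inj:
  assumes frame: "hyperbolic_frame e f g"
    and eq: "comb3 \<alpha> \<beta> \<gamma> e f g = comb3 \<alpha>' \<beta>' \<gamma>' e f g"
  shows "\<alpha> = \<alpha>' \<and> \<beta> = \<beta>' \<and> \<gamma> = \<gamma>'"
  using dot3_comb3_coordinates[OF frame, of \<alpha> \<beta> \<gamma>] dot3_comb3_coordinates[OF frame, of \<alpha>' \<beta>' \<gamma>'] eq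
  by simp

lemma hyperbolic_frame_exists:
  assumes "odd (card (UNIV :: 'a::{finite,field} set))"
  shows "\<exists>e f g :: 'a \<times> 'a \<times> 'a. hyperbolic_frame e f g"
proof -
  obtain a b :: 'a where ab: "a^2 + b^2 = -1"
    using minus_one_sum_of_two_squares[OF assms] by blast
  have two: "(2::'a) \<noteq> 0" using two_neq_zero_if_odd_card[OF assms] .
  define e where "e = (a, b, 1::'a)"
  define f where "f = (- a / 2, - b / 2, 1 / 2 :: 'a)"
  define g where "g = (b, - a, 0::'a)"
  have "dot3 e e = a^2 + b^2 + 1" "dot3 f f = (a^2 + b^2 + 1) / 4"
       "dot3 e f = (1 - (a^2 + b^2)) / 2" "dot3 g g = a^2 + b^2"
    using two by (simp_all add: e_def f_def g_def dot3_def field_simps power2_eq_square)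
  moreover have "dot3 e g = 0" "dot3 f g = 0"
    by (simp_all add: e_def f_def g_def dot3_def algebra_simps)
  ultimately have "hyperbolic_frame e f g"
    using ab two by (simp add: hyperbolic_frame_def)
  thus ?thesis by blast
qed

lemma induced_embedding_from_vectors:
  fixes \<psi> :: "'a::field \<times> 'a \<Rightarrow> 'a \<times> 'a \<times> 'a"
  assumes nonzero: "\<And>u. \<psi> u \<noteq> (0, 0, 0)"
    and inj_lines: "inj (\<lambda>u. span1 (\<psi> u))"
    and orth_iff: "\<And>u v. dot3 (\<psi> u) (\<psi> v) = 0 \<longleftrightarrow> (fst u + fst v)^2 = snd u + snd v"
  shows "Gq_induced_in_ERq TYPE('a)"
proof -
  define F where "F = (\<lambda>u. span1 (\<psi> u))"
  have points: "F u \<in> PG2_points" for u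
    using nonzero unfolding F_def PG2_points_def by blast
  have "Gq_adj u v \<longleftrightarrow> ER_adj (F u) (F v)" for u v
  proof -
    have "Gq_adj u v \<longleftrightarrow> u \<noteq> v \<and> (fst u + fst v)^2 = snd u + snd v"
      unfolding Gq_adj_def parabola_def by auto
    moreover have "ER_adj (F u) (F v) \<longleftrightarrow> F u \<noteq> F v \<and> dot3 (\<psi> u) (\<psi> v) = 0"
      unfolding ER_adj_def using points by (simp add: F_def orthogonal_span1_iff)
    moreover have "F u \<noteq> F v \<longleftrightarrow> u \<noteq> v"
      using inj_lines unfolding F_def by (meson injD)
    ultimately show ?thesis using orth_iff by blast
  qed
  thus ?thesis unfolding Gq_induced_in_ERq_def using inj_lines points F_def by blast
qed

definition frame_embedding ::
    "'a::field \<times> 'a \<times> 'a \<Rightarrow> 'a \<times> 'a \<times> 'a \<Rightarrow> 'a \<times> 'a \<times> 'a \<Rightarrow> 'a \<times> 'a \<Rightarrow> 'a \<times> 'a \<times> 'a" where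
  "frame_embedding e f g u = comb3 1 (- (fst u ^ 2 - snd u) / 2) (fst u) e f g"

lemma dot3_frame_embedding:
  fixes e f g :: "'a::field \<times> 'a \<times> 'a"
  assumes "hyperbolic_frame e f g" and two: "(2::'a) \<noteq> 0"
  shows "dot3 (frame_embedding e f g u) (frame_embedding e f g v)
           = - ((fst u + fst v)^2 - (snd u + snd v)) / (2::'a)"
proof -
  have "dot3 (frame_embedding e f g u) (frame_embedding e f g v)
      = - (fst v ^ 2 - snd v) / 2 + - (fst u ^ 2 - snd u) / 2 - fst u * fst v"
    unfolding frame_embedding_def dot3_comb3_frame[OF assms(1)] by (simp only: mult_1_left mult_1_right)
  also have "\<dots> = - ((fst u + fst v)^2 - (snd u + snd v)) / 2"
    using two by (simp add: add_divide_distrib diff_divide_distrib power2_sum algebra_simps)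
  finally show ?thesis .
qed

text \<open>Every vertex is sent to a nonzero vector, since its e-coefficient is 1.\<close>
lemma frame_embedding_nonzero:
  assumes frame: "hyperbolic_frame e f g"
  shows "frame_embedding e f g u \<noteq> (0, 0, 0)"
proof
  assume "frame_embedding e f g u = (0, 0, 0)"
  hence "dot3 (frame_embedding e f g u) f = 0" by (simp add: dot3_def)
  thus False by (simp add: frame_embedding_def dot3_comb3_coordinates(1)[OF frame])
qed

text \<open>Distinct vertices are sent to distinct lines: proportional images have the same
  e-coefficient 1, hence coincide, and then their frame coordinates agree.\<close>
lemma inj_frame_embedding_lines:
  fixes e f g :: "'a::field \<times> 'a \<times> 'a"
  assumes frame: "hyperbolic_frame e f g" and two: "(2::'a) \<noteq> 0"
  shows "inj (\<lambda>u. span1 (frame_embedding e f g u))"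
proof (rule injI)
  fix u v
  assume "span1 (frame_embedding e f g u) = span1 (frame_embedding e f g v)"
  then obtain c where "frame_embedding e f g u = smult3 c (frame_embedding e f g v)"
    using span1_eq_imp_proportional by blast
  hence "comb3 1 (- (fst u ^ 2 - snd u) / 2) (fst u) e f g
       = comb3 c (c * (- (fst v ^ 2 - snd v) / 2)) (c * fst v) e f g"
    unfolding frame_embedding_def smult3_comb3 by simp
  from comb3_frame_inj[OF frame this] have "fst u = fst v" "snd u = snd v"
    using two by (auto simp: field_simps)
  thus "u = v" by (simp add: prod_eq_iff)
qed

theorem theorem1p4:
  fixes p n :: nat and F :: "'a::{finite,field} itself"
  assumes "prime p" and "odd p" and "n \<ge> 1"
    and "card (UNIV :: 'a set) = p ^ n"
  shows "Gq_induced_in_ERq TYPE('a)"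
proof -
  have odd_card: "odd (card (UNIV :: 'a set))" using assms by simp
  obtain e f g :: "'a \<times> 'a \<times> 'a" where frame: "hyperbolic_frame e f g"
    using hyperbolic_frame_exists[OF odd_card] by blast
  have two: "(2::'a) \<noteq> 0" using two_neq_zero_if_odd_card[OF odd_card] .
  show ?thesis
  proof (rule induced_embedding_from_vectors)
    show "frame_embedding e f g u \<noteq> (0, 0, 0)" for u
      using frame_embedding_nonzero[OF frame] .
    show "inj (\<lambda>u. span1 (frame_embedding e f g u))"
      using inj_frame_embedding_lines[OF frame two] .
    show "dot3 (frame_embedding e f g u) (frame_embedding e f g v) = 0
            \<longleftrightarrow> (fst u + fst v)^2 = snd u + snd v" for u v
      by (auto simp: dot3_frame_embedding[OF frame two] two)
  qed
qed

end
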